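(* Let $u$ be a parking sorted configuration on $K_{m,n}$ with $u_{a_m}\ge 0$, and let $r(u)=(r_1,\dots,r_n)$ be its $r$-vector. Write $u_{a_m}+1=nQ+R$ with $Q,R\in\mathbb N$ and $0\le R<n$. Then $$\mathrm{rank}(u)+1=\sum_{i=1}^n\max\{0,\;Q+\chi(i\le R)+r_i-1\},$$ where $\chi(\mathcal P)=1$ if the proposition $\mathcal P$ is true and $0$ otherwise.
   Context: Let $m,n\ge 1$. $K_{m,n}$ is the complete bipartite graph with vertex set $V=A_m\sqcup B_n$, $A_m=\{a_1,\dots,a_m\}$, $B_n=\{b_1,\dots,b_n\}$, with exactly one edge $\{a_i,b_j\}$ for every $i,j$; $a_m$ is the sink. A configuration is a function $u:V\to\mathbb Z$; $\mathrm{degree}(u)=\sum_c u_c$. For $c\in V$ with graph degree $d_c$ ($d_{a_i}=n$, $d_{b_j}=m$), $\Delta^{(c)}=d_c e_c-\sum_{c'\text{ adjacent to }c}e_{c'}$, with $e_c$ the indicator configuration of $c$; $\Delta^{(C)}=\sum_{c\in C}\Delta^{(c)}$. Toppling equivalence: difference is an integer combination of the $\Delta^{(c)}$. Effective: toppling equivalent to a non-negative configuration. $\mathrm{rank}(u)=-1+\min\{\mathrm{degree}(f): f\ge0,\ u-f\text{ not effective}\}$. A configuration $u$ is parking if $u_c\ge0$ for all $c\neq a_m$ and for every non-empty $C\subseteq V\setminus\{a_m\}$, $u-\Delta^{(C)}$ has a negative value at some vertex other than $a_m$. $u$ is sorted if $u_{a_1}\le\dots\le u_{a_{m-1}}$ and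 $u_{b_1}\le\dots\le u_{b_n}$ (no condition at the sink). For a configuration $u$ with $0\le u_{a_j}\le n-1$ ($j<m$) and $0\le u_{b_i}\le m-1$ that is sorted (in particular any parking sorted configuration), its $r$-vector is $r(u)=(r_1,\dots,r_n)$ with $r_i=u_{b_i}+1-\#\{j\in\{1,\dots,m-1\}: u_{a_j}+1\le i-1\}$; it does not depend on $u_{a_m}$. *)

theory Defs
  imports Main
begin

text \<open>Vertices of K_{m,n}: A i (i = 1..m) and B j (j = 1..n); A m is the sink.
Configurations are functions vert => int; only their values on the vertex set V matter.\<close>

datatype vert = A nat | B nat

definition Vset :: "nat \<Rightarrow> nat \<Rightarrow> vert set" where
  "Vset m n = A ` {1..m} \<union> B ` {1..n}"

definition adj :: "nat \<Rightarrow> nat \<Rightarrow> vert \<Rightarrow> vert \<Rightarrow> bool" where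
  "adj m n x y = (\<exists>i j. i \<in> {1..m} \<and> j \<in> {1..n} \<and>
      ((x = A i \<and> y = B j) \<or> (x = B j \<and> y = A i)))"

fun gdeg :: "nat \<Rightarrow> nat \<Rightarrow> vert \<Rightarrow> int" where
  "gdeg m n (A i) = int n"
| "gdeg m n (B j) = int m"

definition Delta :: "nat \<Rightarrow> nat \<Rightarrow> vert \<Rightarrow> vert \<Rightarrow> int" where
  "Delta m n c x = (if x = c then gdeg m n c else 0) - (if adj m n c x then 1 else 0)"

definition DeltaSet :: "nat \<Rightarrow> nat \<Rightarrow> vert set \<Rightarrow> vert \<Rightarrow> int" where
  "DeltaSet m n C x = (\<Sum>c\<in>C. Delta m n c x)"

definition degree :: "nat \<Rightarrow> nat \<Rightarrow> (vert \<Rightarrow> int) \<Rightarrow> int" where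
  "degree m n u = (\<Sum>c\<in>Vset m n. u c)"

definition toppling_equiv :: "nat \<Rightarrow> nat \<Rightarrow> (vert \<Rightarrow> int) \<Rightarrow> (vert \<Rightarrow> int) \<Rightarrow> bool" where
  "toppling_equiv m n u v = (\<exists>k :: vert \<Rightarrow> int. \<forall>x\<in>Vset m n.
      u x - v x = (\<Sum>c\<in>Vset m n. k c * Delta m n c x))"

definition effective :: "nat \<Rightarrow> nat \<Rightarrow> (vert \<Rightarrow> int) \<Rightarrow> bool" where
  "effective m n u = (\<exists>v. toppling_equiv m n u v \<and> (\<forall>x\<in>Vset m n. v x \<ge> 0))"

text \<open>rank(u) = -1 + min { degree f : f >= 0, u - f not effective }.
Degrees of non-negative f are natural numbers, so the minimum is taken as LEAST over nat.\<close>
definition rank :: "nat \<Rightarrow> nat \<Rightarrow> (vert \<Rightarrow> int) \<Rightarrow> int" where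
  "rank m n u = int (LEAST d :: nat. \<exists>f. (\<forall>x\<in>Vset m n. f x \<ge> 0) \<and> degree m n f = int d
       \<and> \<not> effective m n (\<lambda>x. u x - f x)) - 1"

definition parking :: "nat \<Rightarrow> nat \<Rightarrow> (vert \<Rightarrow> int) \<Rightarrow> bool" where
  "parking m n u = ((\<forall>c\<in>Vset m n - {A m}. u c \<ge> 0) \<and>
     (\<forall>C. C \<subseteq> Vset m n - {A m} \<and> C \<noteq> {} \<longrightarrow>
        (\<exists>x\<in>Vset m n - {A m}. u x - DeltaSet m n C x < 0)))"

definition sorted_conf :: "nat \<Rightarrow> nat \<Rightarrow> (vert \<Rightarrow> int) \<Rightarrow> bool" where
  "sorted_conf m n u = ((\<forall>i j. 1 \<le> i \<and> i \<le> j \<and> j \<le> m - 1 \<longrightarrow> u (A i) \<le> u (A j)) \<and>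
     (\<forall>i j. 1 \<le> i \<and> i \<le> j \<and> j \<le> n \<longrightarrow> u (B i) \<le> u (B j)))"

definition rvec :: "nat \<Rightarrow> nat \<Rightarrow> (vert \<Rightarrow> int) \<Rightarrow> nat \<Rightarrow> int" where
  "rvec m n u i = u (B i) + 1 - int (card {j \<in> {1..m-1}. u (A j) + 1 \<le> int i - 1})"

end

theory Submission
  imports Defs
begin

text \<open>A configuration g on K_{m,n} is effective iff some totals x, y of firings of the two sides
  satisfy x <= sum_i floor((g a_i + y) / n) and y <= sum_j floor((g b_j + x) / m): the right-hand
  sides are the most firings each side can afford. For the configuration u of the theorem, the
  A-side bound at y = p n - w with 0 <= w < n equals m p + Q - [R <= w] - #{i < m. u a_i < w},
  which is where the r-vector enters.

  Upper bound: after removing max 0 (Q + [j <= R] + r_j - 1) chips from every b_j, no pair (x, y)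
  satisfies both inequalities any more.

  Lower bound: if u - f is not effective, then at every level w < n the B side of u - f cannot
  afford - w firings against the A-side bound at - w. Restoring the chips of f on the B side one
  at a time, each chip helps at no more than one level, because a single chip changes the B-side
  bound only at the x of one residue class mod m, and the bound grows by n when x grows by m.
  The chips of f on the A side lower the A-side bounds by exactly their number, summed over the
  n levels, by Hermite's identity sum_{w<n} floor((z - w) / n) = z - n + 1.\<close>

section \<open>Integer arithmetic\<close>

lemma le_div_iff_mult_le_int:
  fixes a d q :: int
  assumes "0 < d"
  shows "q \<le> a div d \<longleftrightarrow> d * q \<le> a"
proof
  assume "q \<le> a div d"
  then have "d * q \<le> d * (a div d)"
    using assms by simp
  also have "\<dots> = a - a mod d"
    by (simp add: minus_mod_eq_mult_div)
  also have "\<dots> \<le> a"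
    using assms by simp
  finally show "d * q \<le> a" .
next
  assume "d * q \<le> a"
  then have "(d * q) div d \<le> a div d"
    using assms by (intro zdiv_mono1) auto
  then show "q \<le> a div d"
    using assms by simp
qed

lemma div_add_mult_eq:
  fixes r p d :: int
  assumes "- d \<le> r" "r < d"
  shows "(r + p * d) div d = p - (if r < 0 then 1 else 0)"
proof -
  have d: "d > 0"
    using assms by simp
  have "r div d = (if r < 0 then - 1 else 0)"
  proof (cases "r < 0")
    case True
    have "(r + d) div d = 0"
      using assms True by simp
    then show ?thesis
      using d True by (simp add: div_add_self2)
  qed (use assms in simp)
  then show ?thesis
    using d by simp
qed

lemma minus_one_div:
  fixes z d :: int
  assumes "d > 0"
  shows "(z - 1) div d = z div d - (if d dvd z then 1 else 0)"
proof -
  have dvd_iff: "z mod d - 1 < 0 \<longleftrightarrow> d dvd z"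
    using pos_mod_sign[OF assms, of z] by (auto simp: dvd_eq_mod_eq_0)
  have "(z - 1) div d = ((z mod d - 1) + z div d * d) div d"
    by (simp add: algebra_simps)
  also have "\<dots> = z div d - (if z mod d - 1 < 0 then 1 else 0)"
    using assms pos_mod_sign[of d z] pos_mod_bound[of d z] by (intro div_add_mult_eq) linarith+
  finally show ?thesis
    unfolding dvd_iff .
qed

lemma sum_div_shifts:
  fixes z :: int
  assumes "d \<ge> 1"
  shows "(\<Sum>w<d. (z - int w) div int d) = z - int d + 1"
proof -
  define q r where "q = z div int d" and "r = z mod int d"
  have z: "z = r + q * int d" and r: "0 \<le> r" "r < int d"
    using assms by (simp_all add: q_def r_def)
  have "(z - int w) div int d = q - (if r < int w then 1 else 0)" if "w < d" for w
    using div_add_mult_eq[of "int d" "r - int w" q] r that z by (simp add: algebra_simps)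
  then have "(\<Sum>w<d. (z - int w) div int d) = (\<Sum>w<d. q - (if r < int w then 1 else 0))"
    by simp
  also have "\<dots> = int d * q - int (card {w \<in> {..<d}. r < int w})"
    by (simp add: sum_subtractf sum.inter_filter[symmetric])
  also have "{w \<in> {..<d}. r < int w} = {Suc (nat r)..<d}"
    using r by auto
  finally show ?thesis
    using r z by simp
qed

lemma int_eq_mult_minus:
  assumes "d \<ge> 1"
  obtains p w where "w < d" "y = p * int d - int w"
proof -
  define w where "w = (- y) mod int d"
  have w: "0 \<le> w" "w < int d"
    using assms by (simp_all add: w_def)
  have "y = - ((- y) div int d) * int d - w"
    using minus_mod_eq_div_mult[of "- y" "int d"] by (simp add: w_def)
  then show ?thesis
    using that[of "nat w" "- ((- y) div int d)"] w by (simp add: nat_less_iff)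
qed

lemma exists_le_with_sum:
  fixes b :: "'a \<Rightarrow> int"
  assumes "finite I" "i0 \<in> I" "x \<le> sum b I"
  obtains k where "\<forall>i\<in>I. k i \<le> b i" "sum k I = x"
proof
  let ?k = "b(i0 := b i0 - (sum b I - x))"
  show "\<forall>i\<in>I. ?k i \<le> b i"
    using assms(3) by simp
  have "sum ?k I = ?k i0 + sum ?k (I - {i0})"
    using assms(1,2) by (rule sum.remove)
  also have "sum ?k (I - {i0}) = sum b (I - {i0})"
    by (rule sum.cong) auto
  also have "sum b (I - {i0}) = sum b I - b i0"
    using assms(1,2) by (simp add: sum_diff1)
  finally show "sum ?k I = x"
    by simp
qed

section \<open>Toppling on K_{m,n}\<close>

lemma sum_Vset:
  "(\<Sum>c\<in>Vset m n. F c) = (\<Sum>i=1..m. F (A i)) + (\<Sum>j=1..n. F (B j))"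
proof -
  have "(\<Sum>c\<in>Vset m n. F c) = sum F (A ` {1..m}) + sum F (B ` {1..n})"
    unfolding Vset_def by (rule sum.union_disjoint) auto
  also have "sum F (A ` {1..m}) = (\<Sum>i=1..m. F (A i))"
    by (subst sum.reindex) (auto simp: inj_on_def)
  also have "sum F (B ` {1..n}) = (\<Sum>j=1..n. F (B j))"
    by (subst sum.reindex) (auto simp: inj_on_def)
  finally show ?thesis .
qed

lemma parking_lt_gdeg:
  assumes "parking m n u" and c: "c \<in> Vset m n - {A m}"
  shows "0 \<le> u c \<and> u c < gdeg m n c"
proof -
  have nonneg: "\<forall>x\<in>Vset m n - {A m}. 0 \<le> u x"
    using assms(1) by (simp add: parking_def)
  have "\<exists>x\<in>Vset m n - {A m}. u x - DeltaSet m n {c} x < 0"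
    using assms(1) c unfolding parking_def by blast
  then obtain x where x: "x \<in> Vset m n - {A m}" "u x - Delta m n c x < 0"
    by (auto simp: DeltaSet_def)
  have "x = c"
  proof (rule ccontr)
    assume "x \<noteq> c"
    then have "Delta m n c x \<le> 0"
      by (simp add: Delta_def)
    with x nonneg show False
      by force
  qed
  then show ?thesis
    using x(2) nonneg c by (cases c) (auto simp: Delta_def adj_def)
qed

lemma sum_Delta_A:
  assumes "i \<in> {1..m}"
  shows "(\<Sum>c\<in>Vset m n. k c * Delta m n c (A i)) = int n * k (A i) - (\<Sum>j=1..n. k (B j))"
proof -
  have "(\<Sum>i'=1..m. k (A i') * Delta m n (A i') (A i)) = (\<Sum>i'=1..m. if i' = i then k (A i) * int n else 0)"
    by (rule sum.cong) (auto simp: Delta_def adj_def)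
  moreover have "(\<Sum>j=1..n. k (B j) * Delta m n (B j) (A i)) = (\<Sum>j=1..n. - k (B j))"
    using assms by (intro sum.cong) (auto simp: Delta_def adj_def)
  ultimately show ?thesis
    using assms by (simp add: sum_Vset sum_negf)
qed

lemma sum_Delta_B:
  assumes "j \<in> {1..n}"
  shows "(\<Sum>c\<in>Vset m n. k c * Delta m n c (B j)) = int m * k (B j) - (\<Sum>i=1..m. k (A i))"
proof -
  have "(\<Sum>j'=1..n. k (B j') * Delta m n (B j') (B j)) = (\<Sum>j'=1..n. if j' = j then k (B j) * int m else 0)"
    by (rule sum.cong) (auto simp: Delta_def adj_def)
  moreover have "(\<Sum>i=1..m. k (A i) * Delta m n (A i) (B j)) = (\<Sum>i=1..m. - k (A i))"
    using assms by (intro sum.cong) (auto simp: Delta_def adj_def)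
  ultimately show ?thesis
    using assms by (simp add: sum_Vset sum_negf)
qed

lemma rank_eqI:
  assumes "\<forall>z\<in>Vset m n. D z \<ge> 0" "\<not> effective m n (\<lambda>z. u z - D z)"
    and "\<And>f. \<forall>z\<in>Vset m n. f z \<ge> 0 \<Longrightarrow> \<not> effective m n (\<lambda>z. u z - f z)
      \<Longrightarrow> degree m n D \<le> degree m n f"
  shows "rank m n u + 1 = degree m n D"
proof -
  have "degree m n D \<ge> 0"
    using assms(1) unfolding degree_def by (simp add: sum_nonneg)
  moreover have "(LEAST d. \<exists>f. (\<forall>z\<in>Vset m n. f z \<ge> 0) \<and> degree m n f = int d
      \<and> \<not> effective m n (\<lambda>z. u z - f z)) = nat (degree m n D)"
    by (rule Least_equality) (use assms calculation in \<open>force+\<close>)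
  ultimately show ?thesis
    by (simp add: rank_def)
qed

section \<open>Firing capacities\<close>

text \<open>If the other side fires x times in total, vertex i (of degree d, holding h i chips) can fire
  at most (h i + x) div d times without going into debt.\<close>

definition firing_capacity :: "nat \<Rightarrow> nat \<Rightarrow> (nat \<Rightarrow> int) \<Rightarrow> int \<Rightarrow> int" where
  "firing_capacity k d h x = (\<Sum>i=1..k. (h i + x) div int d)"

lemma effective_imp_firing_capacity:
  assumes "effective m n g" "m \<ge> 1" "n \<ge> 1"
  obtains x y where "x \<le> firing_capacity m n (\<lambda>i. g (A i)) y"
    and "y \<le> firing_capacity n m (\<lambda>j. g (B j)) x"
proof -
  obtain v k where eq: "\<forall>z\<in>Vset m n. g z - v z = (\<Sum>c\<in>Vset m n. k c * Delta m n c z)"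
    and nonneg: "\<forall>z\<in>Vset m n. v z \<ge> 0"
    using assms(1) unfolding effective_def toppling_equiv_def by blast
  define x where "x = (\<Sum>i=1..m. k (A i))"
  define y where "y = (\<Sum>j=1..n. k (B j))"
  have "k (A i) \<le> (g (A i) + y) div int n" if "i \<in> {1..m}" for i
  proof -
    have "A i \<in> Vset m n"
      using that by (simp add: Vset_def)
    then have "int n * k (A i) \<le> g (A i) + y"
      using eq nonneg sum_Delta_A[OF that, where k = k] by (force simp: y_def)
    then show ?thesis
      using assms by (simp add: le_div_iff_mult_le_int)
  qed
  then have x_le: "x \<le> firing_capacity m n (\<lambda>i. g (A i)) y"
    unfolding x_def firing_capacity_def by (intro sum_mono) auto
  have "k (B j) \<le> (g (B j) + x) div int m" if "j \<in> {1..n}" for j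
  proof -
    have "B j \<in> Vset m n"
      using that by (simp add: Vset_def)
    then have "int m * k (B j) \<le> g (B j) + x"
      using eq nonneg sum_Delta_B[OF that, where k = k] by (force simp: x_def)
    then show ?thesis
      using assms by (simp add: le_div_iff_mult_le_int)
  qed
  then have "y \<le> firing_capacity n m (\<lambda>j. g (B j)) x"
    unfolding y_def firing_capacity_def by (intro sum_mono) auto
  with x_le show ?thesis
    by (rule that)
qed

lemma firing_capacity_imp_effective:
  assumes "m \<ge> 1" "n \<ge> 1"
    and x: "x \<le> firing_capacity m n (\<lambda>i. g (A i)) y"
    and y: "y \<le> firing_capacity n m (\<lambda>j. g (B j)) x"
  shows "effective m n g"
proof -
  obtain kA where kA: "\<forall>i\<in>{1..m}. kA i \<le> (g (A i) + y) div int n" "(\<Sum>i=1..m. kA i) = x"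
    using exists_le_with_sum[of "{1..m}" 1 x] x assms(1) by (auto simp: firing_capacity_def)
  obtain kB where kB: "\<forall>j\<in>{1..n}. kB j \<le> (g (B j) + x) div int m" "(\<Sum>j=1..n. kB j) = y"
    using exists_le_with_sum[of "{1..n}" 1 y] y assms(2) by (auto simp: firing_capacity_def)
  define k where "k z = (case z of A i \<Rightarrow> kA i | B j \<Rightarrow> kB j)" for z
  define v where "v z = g z - (\<Sum>c\<in>Vset m n. k c * Delta m n c z)" for z
  have "v z \<ge> 0" if "z \<in> Vset m n" for z
  proof -
    from that consider (A) i where "z = A i" "i \<in> {1..m}" | (B) j where "z = B j" "j \<in> {1..n}"
      unfolding Vset_def by auto
    then show ?thesis
    proof cases
      case A
      then have "int n * kA i \<le> g (A i) + y"
        using kA(1) assms(2) by (simp add: le_div_iff_mult_le_int)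
      then show ?thesis
        using A sum_Delta_A[OF A(2), where k = k] kB(2) by (simp add: v_def k_def)
    next
      case B
      then have "int m * kB j \<le> g (B j) + x"
        using kB(1) assms(1) by (simp add: le_div_iff_mult_le_int)
      then show ?thesis
        using B sum_Delta_B[OF B(2), where k = k] kA(2) by (simp add: v_def k_def)
    qed
  qed
  moreover have "toppling_equiv m n g v"
    unfolding toppling_equiv_def v_def by auto
  ultimately show "effective m n g"
    unfolding effective_def by blast
qed

lemma firing_capacity_mono:
  assumes "d \<ge> 1" "\<And>i. i \<in> {1..k} \<Longrightarrow> h i + x \<le> h' i + x'"
  shows "firing_capacity k d h x \<le> firing_capacity k d h' x'"
  unfolding firing_capacity_def using assms by (intro sum_mono zdiv_mono1) auto

lemma firing_capacity_add_mult:
  assumes "d \<ge> 1"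
  shows "firing_capacity k d h (x + t * int d) = firing_capacity k d h x + t * int k"
proof -
  have "(h i + (x + t * int d)) div int d = (h i + x) div int d + t" for i
    using assms by (simp add: add.assoc [symmetric])
  then show ?thesis
    by (simp add: firing_capacity_def sum.distrib)
qed

lemma firing_capacity_decr:
  assumes "d \<ge> 1" "j \<in> {1..k}"
  shows "firing_capacity k d (h(j := h j - 1)) x
    = firing_capacity k d h x - (if int d dvd h j + x then 1 else 0)"
proof -
  have "((h(j := h j - 1)) i + x) div int d
      = (h i + x) div int d - (if i = j then if int d dvd h j + x then 1 else 0 else 0)" for i
    using minus_one_div[of "int d" "h j + x"] assms(1) by (auto simp: algebra_simps)
  then show ?thesis
    using assms(2) by (simp add: firing_capacity_def sum_subtractf)
qed

lemma sum_firing_capacity_shifts: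
  assumes "d \<ge> 1"
  shows "(\<Sum>w<d. firing_capacity k d h (- int w)) = (\<Sum>i=1..k. h i) - int k * (int d - 1)"
proof -
  have "(\<Sum>w<d. firing_capacity k d h (- int w)) = (\<Sum>i=1..k. \<Sum>w<d. (h i - int w) div int d)"
    unfolding firing_capacity_def by (subst sum.swap) simp
  also have "\<dots> = (\<Sum>i=1..k. h i - int d + 1)"
    using assms by (simp add: sum_div_shifts)
  finally show ?thesis
    by (simp add: sum.distrib sum_subtractf algebra_simps)
qed

section \<open>Restoring chips one at a time\<close>

lemma firing_capacity_sorted_ge:
  assumes "d \<ge> 1" "w < k"
    and bounds: "\<And>j. j \<in> {1..k} \<Longrightarrow> 0 \<le> b j \<and> b j < int d"
    and sorted: "\<And>i j. 1 \<le> i \<Longrightarrow> i \<le> j \<Longrightarrow> j \<le> k \<Longrightarrow> b i \<le> b j"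
  shows "- int w \<le> firing_capacity k d b (- b (Suc w))"
proof -
  have "- (if j \<le> w then 1 else 0) \<le> (b j + - b (Suc w)) div int d" if j: "j \<in> {1..k}" for j
  proof (cases "j \<le> w")
    case True
    then have "- int d \<le> b j - b (Suc w)"
      using bounds[of j] bounds[of "Suc w"] j assms(2) by auto
    then show ?thesis
      using True assms(1) by (simp add: le_div_iff_mult_le_int)
  next
    case False
    then show ?thesis
      using sorted[of "Suc w" j] j assms(1) by (simp add: pos_imp_zdiv_nonneg_iff)
  qed
  then have "(\<Sum>j=1..k. - (if j \<le> w then 1 else 0)) \<le> firing_capacity k d b (- b (Suc w))"
    unfolding firing_capacity_def by (intro sum_mono) simp
  moreover have "{j \<in> {1..k}. j \<le> w} = {1..w}"
    using assms(2) by auto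
  ultimately show ?thesis
    by (simp add: sum_negf sum.inter_filter[symmetric])
qed

lemma firing_capacity_levels_eq:
  assumes "d \<ge> 1" "int d dvd x' - x"
    and "firing_capacity k d h x = - int w" "firing_capacity k d h x' = - int w'"
    and "w < k" "w' < k"
  shows "w = w'"
proof -
  obtain t where "x' - x = int d * t"
    using assms(2) by (rule dvdE)
  then have "x' = x + t * int d"
    by (simp add: algebra_simps)
  then have diff: "int w - int w' = t * int k"
    using assms(3,4) firing_capacity_add_mult[OF assms(1), of k h x t] by simp
  have "\<bar>t * int k\<bar> < int k"
    using assms(5,6) unfolding diff[symmetric] by auto
  then have "t = 0"
    using mult_right_less_imp_less[of "\<bar>t\<bar>" "int k" 1] by (simp add: abs_mult)
  then show ?thesis
    using diff by simp
qed

lemma sum_excess_eq_0: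
  assumes "d \<ge> 1"
    and bounds: "\<And>j. j \<in> {1..k} \<Longrightarrow> 0 \<le> b j \<and> b j < int d"
    and sorted: "\<And>i j. 1 \<le> i \<Longrightarrow> i \<le> j \<Longrightarrow> j \<le> k \<Longrightarrow> b i \<le> b j"
    and below: "\<forall>w<k. firing_capacity k d b (xs w) < - int w"
  shows "(\<Sum>w<k. max 0 (b (Suc w) + 1 + xs w)) = 0"
proof (intro sum.neutral ballI)
  fix w assume w: "w \<in> {..<k}"
  have "firing_capacity k d b (xs w) < - int w"
    using below w by simp
  also have "\<dots> \<le> firing_capacity k d b (- b (Suc w))"
    using firing_capacity_sorted_ge[OF assms(1) _ bounds sorted] w by simp
  finally have less: "firing_capacity k d b (xs w) < firing_capacity k d b (- b (Suc w))" .
  have "xs w < - b (Suc w)"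
  proof (rule ccontr)
    assume "\<not> xs w < - b (Suc w)"
    then have "firing_capacity k d b (- b (Suc w)) \<le> firing_capacity k d b (xs w)"
      using assms(1) by (intro firing_capacity_mono) auto
    with less show False
      by simp
  qed
  then show "max 0 (b (Suc w) + 1 + xs w) = 0"
    by simp
qed

text \<open>The added chip raises the capacity at x only if d divides h j + x (firing_capacity_decr);
  by firing_capacity_levels_eq this lifts the capacity up to a level - w for at most one w.\<close>

lemma firing_capacity_below_add_chip:
  assumes "d \<ge> 1" "j \<in> {1..k}"
    and below: "\<forall>w<k. firing_capacity k d (h(j := h j - 1)) (xs w) < - int w"
  obtains xs' w0 where "\<forall>w<k. firing_capacity k d h (xs' w) < - int w"
    and "\<And>w. xs w \<le> xs' w + (if w = w0 then 1 else 0)"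
proof -
  define W where "W = {w. w < k \<and> - int w \<le> firing_capacity k d h (xs w)}"
  have hit: "firing_capacity k d h (xs w) = - int w \<and> int d dvd h j + xs w" if "w \<in> W" for w
    using that below firing_capacity_decr[OF assms(1,2), of h "xs w"]
    by (auto simp: W_def split: if_splits)
  have "w1 = w2" if w1: "w1 \<in> W" and w2: "w2 \<in> W" for w1 w2
  proof (rule firing_capacity_levels_eq[OF assms(1)])
    show "int d dvd xs w2 - xs w1"
      using hit[OF w1] hit[OF w2] dvd_diff[of "int d" "h j + xs w2" "h j + xs w1"] by simp
  qed (use hit w1 w2 in \<open>auto simp: W_def\<close>)
  then obtain w0 where W: "W \<subseteq> {w0}"
    by blast
  define xs' where "xs' w = (if w \<in> W then xs w - 1 else xs w)" for w
  have "firing_capacity k d h (xs' w) < - int w" if "w < k" for w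
  proof (cases "w \<in> W")
    case True
    have "firing_capacity k d h (xs w - 1) \<le> firing_capacity k d (h(j := h j - 1)) (xs w)"
      using assms(1) by (rule firing_capacity_mono) auto
    moreover have "firing_capacity k d (h(j := h j - 1)) (xs w) < - int w"
      using below that by blast
    ultimately show ?thesis
      using True by (simp add: xs'_def)
  qed (use that in \<open>simp add: xs'_def W_def\<close>)
  moreover have "xs w \<le> xs' w + (if w = w0 then 1 else 0)" for w
    using W by (auto simp: xs'_def)
  ultimately show ?thesis
    using that by blast
qed

lemma sum_max_le_add_one:
  fixes c xs xs' :: "nat \<Rightarrow> int"
  assumes "\<And>w. xs w \<le> xs' w + (if w = w0 then 1 else 0)"
  shows "(\<Sum>w<k. max 0 (c w + xs w)) \<le> (\<Sum>w<k. max 0 (c w + xs' w)) + 1"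
proof -
  have "(\<Sum>w<k. max 0 (c w + xs w)) \<le> (\<Sum>w<k. max 0 (c w + xs' w) + (if w = w0 then 1 else 0))"
  proof (rule sum_mono)
    fix w
    show "max 0 (c w + xs w) \<le> max 0 (c w + xs' w) + (if w = w0 then 1 else 0)"
      using assms[of w] by (cases "w = w0") auto
  qed
  also have "\<dots> \<le> (\<Sum>w<k. max 0 (c w + xs' w)) + 1"
    by (simp add: sum.distrib)
  finally show ?thesis .
qed

lemma sum_excess_le_deficit:
  assumes "d \<ge> 1"
    and bounds: "\<And>j. j \<in> {1..k} \<Longrightarrow> 0 \<le> b j \<and> b j < int d"
    and sorted: "\<And>i j. 1 \<le> i \<Longrightarrow> i \<le> j \<Longrightarrow> j \<le> k \<Longrightarrow> b i \<le> b j"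
    and "\<forall>j\<in>{1..k}. h j \<le> b j"
    and "\<forall>w<k. firing_capacity k d h (xs w) < - int w"
  shows "(\<Sum>w<k. max 0 (b (Suc w) + 1 + xs w)) \<le> (\<Sum>j=1..k. b j - h j)"
  using assms(4,5)
proof (induction "\<Sum>j=1..k. nat (b j - h j)" arbitrary: h xs rule: less_induct)
  case less
  show ?case
  proof (cases "\<forall>j\<in>{1..k}. h j = b j")
    case True
    then have "firing_capacity k d h = firing_capacity k d b"
      by (auto simp: firing_capacity_def)
    then have "(\<Sum>w<k. max 0 (b (Suc w) + 1 + xs w)) = 0"
      using sum_excess_eq_0[OF assms(1) bounds sorted] less.prems(2) by simp
    then show ?thesis
      using True by simp
  next
    case False
    then obtain j where j: "j \<in> {1..k}" "h j < b j"
      using less.prems(1) by force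
    define h' where "h' = h(j := h j + 1)"
    have h: "h = h'(j := h' j - 1)"
      by (simp add: h'_def)
    obtain xs' w0 where below': "\<forall>w<k. firing_capacity k d h' (xs' w) < - int w"
      and xs': "\<And>w. xs w \<le> xs' w + (if w = w0 then 1 else 0)"
      using firing_capacity_below_add_chip[OF assms(1) j(1), of h' xs] less.prems(2) h by auto
    have diff: "b i - h i = (b i - h' i) + (if i = j then 1 else 0)"
      and diff_nat: "nat (b i - h i) = nat (b i - h' i) + (if i = j then 1 else 0)" for i
      using j(2) by (auto simp: h'_def)
    have deficit: "(\<Sum>i=1..k. b i - h i) = (\<Sum>i=1..k. b i - h' i) + 1"
      unfolding diff using j(1) by (simp add: sum.distrib)
    have deficit_nat: "(\<Sum>i=1..k. nat (b i - h i)) = (\<Sum>i=1..k. nat (b i - h' i)) + 1"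
      unfolding diff_nat using j(1) by (simp add: sum.distrib)
    have "(\<Sum>w<k. max 0 (b (Suc w) + 1 + xs w)) \<le> (\<Sum>w<k. max 0 (b (Suc w) + 1 + xs' w)) + 1"
      using xs' by (rule sum_max_le_add_one)
    also have "(\<Sum>w<k. max 0 (b (Suc w) + 1 + xs' w)) \<le> (\<Sum>i=1..k. b i - h' i)"
      using less.hyps[of h' xs'] deficit_nat less.prems(1) j below' by (auto simp: h'_def)
    finally show ?thesis
      using deficit by simp
  qed
qed

section \<open>The rank formula\<close>

locale bounded_sorted_conf =
  fixes m n :: nat and u :: "vert \<Rightarrow> int" and Q R :: int
  assumes m_pos: "m \<ge> 1" and n_pos: "n \<ge> 1"
    and bounds_A: "\<And>i. i \<in> {1..m-1} \<Longrightarrow> 0 \<le> u (A i) \<and> u (A i) < int n"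
    and bounds_B: "\<And>j. j \<in> {1..n} \<Longrightarrow> 0 \<le> u (B j) \<and> u (B j) < int m"
    and sorted_B: "\<And>i j. 1 \<le> i \<Longrightarrow> i \<le> j \<Longrightarrow> j \<le> n \<Longrightarrow> u (B i) \<le> u (B j)"
    and sink: "u (A m) + 1 = int n * Q + R" "0 \<le> R" "R < int n"
begin

definition count_below :: "nat \<Rightarrow> int" where
  "count_below w = int (card {i \<in> {1..m-1}. u (A i) < int w})"

lemma count_below_mono: "w \<le> w' \<Longrightarrow> count_below w \<le> count_below w'"
  unfolding count_below_def by (auto intro!: card_mono)

lemma count_below_le: "count_below w \<le> int m - 1"
proof -
  have "card {i \<in> {1..m-1}. u (A i) < int w} \<le> card {1..m-1}"
    by (rule card_mono) auto
  then show ?thesis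
    using m_pos by (simp add: count_below_def)
qed

lemma rvec_eq: "j \<ge> 1 \<Longrightarrow> rvec m n u j = u (B j) + 1 - count_below (j - 1)"
  unfolding rvec_def count_below_def
  by (rule arg_cong[where f = "\<lambda>S. u (B j) + 1 - int (card S)"]) auto

definition rank_divisor :: "vert \<Rightarrow> int" where
  "rank_divisor z = (case z of A _ \<Rightarrow> 0
     | B j \<Rightarrow> max 0 (Q + (if int j \<le> R then 1 else 0) + rvec m n u j - 1))"

lemma div_A_eq:
  assumes "i \<in> {1..m-1}" "w < n"
  shows "(u (A i) + (p * int n - int w)) div int n = p - (if u (A i) < int w then 1 else 0)"
proof -
  have "(u (A i) + (p * int n - int w)) div int n = ((u (A i) - int w) + p * int n) div int n"
    by (simp add: algebra_simps)
  also have "\<dots> = p - (if u (A i) - int w < 0 then 1 else 0)"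
    using bounds_A[OF assms(1)] assms(2) by (intro div_add_mult_eq) simp_all
  finally show ?thesis
    by simp
qed

lemma div_sink_eq:
  assumes "w < n"
  shows "(u (A m) + (p * int n - int w)) div int n = p + Q - (if R \<le> int w then 1 else 0)"
proof -
  have sink_value: "u (A m) = int n * Q + R - 1"
    using sink(1) by linarith
  have "(u (A m) + (p * int n - int w)) div int n = ((R - 1 - int w) + (p + Q) * int n) div int n"
    unfolding sink_value by (simp add: algebra_simps)
  also have "\<dots> = p + Q - (if R - 1 - int w < 0 then 1 else 0)"
    using sink(2,3) assms by (intro div_add_mult_eq) simp_all
  finally show ?thesis
    by auto
qed

lemma firing_capacity_A_eq:
  assumes "w < n"
  shows "firing_capacity m n (\<lambda>i. u (A i)) (p * int n - int w)
    = int m * p + Q - (if R \<le> int w then 1 else 0) - count_below w"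
proof -
  have "(\<Sum>i=1..m-1. (u (A i) + (p * int n - int w)) div int n)
      = (\<Sum>i=1..m-1. p - (if u (A i) < int w then 1 else 0))"
    using div_A_eq assms by simp
  also have "\<dots> = int (m - 1) * p - count_below w"
    by (simp add: count_below_def sum_subtractf sum.inter_filter[symmetric])
  finally have non_sink: "(\<Sum>i=1..m-1. (u (A i) + (p * int n - int w)) div int n)
      = int (m - 1) * p - count_below w" .
  have "{1..m} = insert m {1..m-1}"
    using m_pos by auto
  then have "firing_capacity m n (\<lambda>i. u (A i)) (p * int n - int w)
      = (u (A m) + (p * int n - int w)) div int n
        + (\<Sum>i=1..m-1. (u (A i) + (p * int n - int w)) div int n)"
    using m_pos by (simp add: firing_capacity_def)
  then show ?thesis
    unfolding non_sink div_sink_eq[OF assms] using m_pos by (simp add: of_nat_diff algebra_simps)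
qed

lemma rank_divisor_B_Suc:
  assumes "w < n"
  shows "rank_divisor (B (Suc w))
    = max 0 (u (B (Suc w)) + 1 + firing_capacity m n (\<lambda>i. u (A i)) (- int w))"
  using firing_capacity_A_eq[OF assms, of 0] by (auto simp: rank_divisor_def rvec_eq algebra_simps)

lemma rank_divisor_nonneg: "rank_divisor z \<ge> 0"
  by (simp add: rank_divisor_def split: vert.split)

text \<open>The second summand is the A-side capacity at y = p n - w (firing_capacity_A_eq). After
  removing rank_divisor, each b_j with j <= w + 1 falls one firing short, so the B side affords at
  most n p - (w + 1) < y firings.\<close>

lemma div_minus_rank_divisor_le:
  assumes j: "j \<in> {1..n}" and "w < n"
  shows "(u (B j) - rank_divisor (B j)
      + (int m * p + Q - (if R \<le> int w then 1 else 0) - count_below w)) div int m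
    \<le> p - (if j \<le> Suc w then 1 else 0)"
proof -
  define N where "N = count_below (j - 1) - (if int j \<le> R then 1 else 0)
    - (if R \<le> int w then 1 else 0) - count_below w"
  have "u (B j) - rank_divisor (B j) \<le> count_below (j - 1) - Q - (if int j \<le> R then 1 else 0)"
    using j by (simp add: rank_divisor_def rvec_eq)
  then have "(u (B j) - rank_divisor (B j)
      + (int m * p + Q - (if R \<le> int w then 1 else 0) - count_below w)) div int m
    \<le> (N + p * int m) div int m"
    using m_pos by (intro zdiv_mono1) (simp_all add: N_def algebra_simps)
  also have "\<dots> = N div int m + p"
    using m_pos by simp
  also have "N div int m \<le> - (if j \<le> Suc w then 1 else 0)"
  proof (cases "j \<le> Suc w")
    case True
    moreover have "count_below (j - 1) \<le> count_below w"
      using True by (intro count_below_mono) simp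
    ultimately have "N \<le> - 1"
      by (auto simp: N_def)
    then show ?thesis
      using True m_pos le_div_iff_mult_le_int[of "int m" 0 N] by simp
  next
    case False
    have "0 \<le> count_below w"
      by (simp add: count_below_def)
    then have "N < int m"
      using count_below_le[of "j - 1"] by (simp add: N_def)
    then show ?thesis
      using False m_pos le_div_iff_mult_le_int[of "int m" 1 N] by simp
  qed
  finally show ?thesis
    by simp
qed

lemma not_effective_minus_rank_divisor: "\<not> effective m n (\<lambda>z. u z - rank_divisor z)"
proof
  let ?g = "\<lambda>z. u z - rank_divisor z"
  assume "effective m n ?g"
  then obtain x y where x: "x \<le> firing_capacity m n (\<lambda>i. ?g (A i)) y"
    and y: "y \<le> firing_capacity n m (\<lambda>j. ?g (B j)) x"
    using m_pos n_pos by (rule effective_imp_firing_capacity)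
  obtain p w where w: "w < n" and y_eq: "y = p * int n - int w"
    using int_eq_mult_minus n_pos by blast
  define X where "X = int m * p + Q - (if R \<le> int w then 1 else 0) - count_below w"
  have "x \<le> X"
    using x firing_capacity_A_eq[OF w, of p] by (simp add: X_def y_eq rank_divisor_def)
  then have "firing_capacity n m (\<lambda>j. ?g (B j)) x \<le> firing_capacity n m (\<lambda>j. ?g (B j)) X"
    using m_pos by (intro firing_capacity_mono) auto
  also have "\<dots> \<le> (\<Sum>j=1..n. p - (if j \<le> Suc w then 1 else 0))"
    unfolding firing_capacity_def X_def using w by (intro sum_mono div_minus_rank_divisor_le)
  also have "\<dots> = int n * p - int (Suc w)"
  proof -
    have "{j \<in> {1..n}. j \<le> Suc w} = {1..Suc w}"
      using w by auto
    then show ?thesis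
      by (simp add: sum_subtractf sum.inter_filter[symmetric])
  qed
  finally show False
    using y y_eq by (simp add: algebra_simps)
qed

lemma degree_rank_divisor_le:
  assumes f_nonneg: "\<forall>z\<in>Vset m n. f z \<ge> 0" and not_eff: "\<not> effective m n (\<lambda>z. u z - f z)"
  shows "degree m n rank_divisor \<le> degree m n f"
proof -
  let ?uA = "\<lambda>i. u (A i)" and ?gA = "\<lambda>i. u (A i) - f (A i)" and ?gB = "\<lambda>j. u (B j) - f (B j)"
  define xs where "xs w = firing_capacity m n ?gA (- int w)" for w
  have fA: "f (A i) \<ge> 0" if "i \<in> {1..m}" for i
    using f_nonneg that by (simp add: Vset_def)
  have fB: "f (B j) \<ge> 0" if "j \<in> {1..n}" for j
    using f_nonneg that by (simp add: Vset_def)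
  have "firing_capacity n m ?gB (xs w) < - int w" for w
  proof (rule ccontr)
    assume "\<not> firing_capacity n m ?gB (xs w) < - int w"
    then have "effective m n (\<lambda>z. u z - f z)"
      by (intro firing_capacity_imp_effective[OF m_pos n_pos, where x = "xs w" and y = "- int w"])
        (simp_all add: xs_def)
    with not_eff show False
      by contradiction
  qed
  then have excess: "(\<Sum>w<n. max 0 (u (B (Suc w)) + 1 + xs w)) \<le> (\<Sum>j=1..n. f (B j))"
    using sum_excess_le_deficit[where b = "\<lambda>j. u (B j)" and h = ?gB, OF m_pos bounds_B sorted_B] fB
    by simp
  have loss: "(\<Sum>w<n. firing_capacity m n ?uA (- int w) - xs w) = (\<Sum>i=1..m. f (A i))"
    using n_pos by (simp add: xs_def sum_subtractf sum_firing_capacity_shifts)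
  have "rank_divisor (B (Suc w))
      \<le> max 0 (u (B (Suc w)) + 1 + xs w) + (firing_capacity m n ?uA (- int w) - xs w)"
    if "w < n" for w
  proof -
    have "xs w \<le> firing_capacity m n ?uA (- int w)"
      unfolding xs_def using n_pos fA by (intro firing_capacity_mono) auto
    then show ?thesis
      using rank_divisor_B_Suc[OF that] by simp
  qed
  then have "(\<Sum>w<n. rank_divisor (B (Suc w)))
      \<le> (\<Sum>w<n. max 0 (u (B (Suc w)) + 1 + xs w)) + (\<Sum>i=1..m. f (A i))"
    unfolding loss[symmetric] sum.distrib[symmetric] by (intro sum_mono) simp
  then show ?thesis
    using excess by (simp add: degree_def sum_Vset rank_divisor_def sum.atLeast1_atMost_eq)
qed

lemma rank_eq_degree_rank_divisor: "rank m n u + 1 = degree m n rank_divisor"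
  by (rule rank_eqI) (use rank_divisor_nonneg not_effective_minus_rank_divisor
      degree_rank_divisor_le in auto)

end

lemma bounded_sorted_conf_of_parking:
  assumes "m \<ge> 1" "n \<ge> 1" "parking m n u" "sorted_conf m n u"
    and "u (A m) + 1 = int n * Q + R" "0 \<le> R" "R < int n"
  shows "bounded_sorted_conf m n u Q R"
proof
  show "0 \<le> u (A i) \<and> u (A i) < int n" if "i \<in> {1..m-1}" for i
  proof -
    have "A i \<in> Vset m n - {A m}"
      using that by (auto simp: Vset_def)
    from parking_lt_gdeg[OF assms(3) this] show ?thesis
      by simp
  qed
  show "0 \<le> u (B j) \<and> u (B j) < int m" if "j \<in> {1..n}" for j
  proof -
    have "B j \<in> Vset m n - {A m}"
      using that by (auto simp: Vset_def)
    from parking_lt_gdeg[OF assms(3) this] show ?thesis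
      by simp
  qed
  show "u (B i) \<le> u (B j)" if "1 \<le> i" "i \<le> j" "j \<le> n" for i j
    using assms(4) that by (simp add: sorted_conf_def)
qed (use assms in simp_all)

theorem theorem11p1:
  fixes m n :: nat and u :: "vert \<Rightarrow> int" and Q R :: int
  assumes "m \<ge> 1" and "n \<ge> 1"
    and "parking m n u" and "sorted_conf m n u"
    and "u (A m) \<ge> 0"
    and "u (A m) + 1 = int n * Q + R" and "Q \<ge> 0" and "0 \<le> R" and "R < int n"
  shows "rank m n u + 1 =
    (\<Sum>i = 1..n. max 0 (Q + (if int i \<le> R then 1 else 0) + rvec m n u i - 1))"
proof -
  interpret bounded_sorted_conf m n u Q R
    using assms(1-4,6,8,9) by (rule bounded_sorted_conf_of_parking)
  have "rank m n u + 1 = degree m n rank_divisor"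
    by (rule rank_eq_degree_rank_divisor)
  then show ?thesis
    by (simp add: degree_def sum_Vset rank_divisor_def)
qed

end
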